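(* Fix a single-item interdependent-values setting and let $\mathcal M$ be a universally ex-post IC-IR mechanism that is an $\alpha$-approximation to the optimal welfare, i.e., for every signal profile $\mathbf s$ the expected welfare of $\mathcal M$ when all bidders bid truthfully ($\mathbf b=\mathbf s$) is at least $\mathrm{OPT}(\mathbf s)/\alpha$. For $\epsilon\in(0,1)$ let $\mathcal M'$ be the randomized mechanism that runs $\mathcal M$ with probability $1-\epsilon$ and the proportional allocation mechanism with probability $\epsilon$. Then the price of anarchy of $\mathcal M'$ with respect to pure Nash equilibria under no-overbidding is at most $\frac{\alpha}{1-\epsilon}$: for every signal profile $\mathbf s$ and every pure Nash equilibrium $\mathbf b$ of $\mathcal M'$ at $\mathbf s$ under no-overbidding, $\mathrm{OPT}(\mathbf s)\le\frac{\alpha}{1-\epsilon}\,\mathbb E[\mathrm{SW}_{\mathcal M'}(\mathbf b,\mathbf s)]$.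
   Context: Single-item interdependent-values setting: bidders $i\in[n]$ have private signals $s_i\in S_i\subseteq\mathbb R_{\ge0}$ (intervals) and publicly known valuations $v_i:S_1\times\dots\times S_n\to\mathbb R_{\ge0}$, weakly increasing in every coordinate and strictly increasing in $s_i$. A deterministic mechanism $(x,p)$ solicits bids $b_i\in S_i$, outputs $x_i(\mathbf b)\in\{0,1\}$ with $\sum_ix_i\le1$ and payments $p_i(\mathbf b)$; utility $u_i(\mathbf b;\mathbf s)=x_i(\mathbf b)v_i(\mathbf s)-p_i(\mathbf b)$. Ex-post IC-IR: for every $\mathbf s$, $i$, $b_i\in S_i$: $x_i(\mathbf s)v_i(\mathbf s)-p_i(\mathbf s)\ge\max\{x_i(b_i,\mathbf s_{-i})v_i(\mathbf s)-p_i(b_i,\mathbf s_{-i}),0\}$. Universally ex-post IC-IR: a probability distribution over deterministic ex-post IC-IR mechanisms. Proportional allocation mechanism: given $\mathbf b$, allocates the item to bidder $i$ with probability $\frac{b_i}{\sum_jb_j+1}$ and charges no payments. $\mathrm{OPT}(\mathbf s)=\max_iv_i(\mathbf s)$; $\mathrm{SW}_{\mathcal M'}(\mathbf b,\mathbf s)=\sum_ix_i(\mathbf b)v_i(\mathbf s)$ (random). A pure Nash equilibrium at $\mathbf s$ under no-overbidding is a bid profile $\mathbf b\le\mathbf s$ such that for every $i$ and every $b_i'\in S_i$ with $b_i'\le s_i$, $\mathbb E[u_i((b_i',\mathbf b_{-i});\mathbf s)]\le\mathbb E[u_i(\mathbf b;\mathbf s)]$ (expectations over the mechanism's randomness). 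*)

theory Defs
  imports "HOL-Probability.Probability"
begin

text \<open>A deterministic mechanism is a pair (x, p) of an
  allocation rule x b i (in {0,1}) and a payment rule p b i.\<close>

type_synonym 'i mech = "(('i \<Rightarrow> real) \<Rightarrow> 'i \<Rightarrow> real) \<times> (('i \<Rightarrow> real) \<Rightarrow> 'i \<Rightarrow> real)"

definition profiles :: "('i \<Rightarrow> real set) \<Rightarrow> ('i \<Rightarrow> real) set" where
  "profiles S = {s. \<forall>i. s i \<in> S i}"

definition valid_setting :: "('i::finite \<Rightarrow> real set) \<Rightarrow> ('i \<Rightarrow> ('i \<Rightarrow> real) \<Rightarrow> real) \<Rightarrow> bool" where
  "valid_setting S v \<longleftrightarrow>
     (\<forall>i. is_interval (S i) \<and> S i \<subseteq> {0..}) \<and>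
     (\<forall>i. \<forall>s\<in>profiles S. v i s \<ge> 0) \<and>
     (\<forall>i j. \<forall>s\<in>profiles S. \<forall>t\<in>S j. s j \<le> t \<longrightarrow> v i s \<le> v i (s(j := t))) \<and>
     (\<forall>i. \<forall>s\<in>profiles S. \<forall>t\<in>S i. s i < t \<longrightarrow> v i s < v i (s(i := t)))"

definition OPT :: "('i::finite \<Rightarrow> ('i \<Rightarrow> real) \<Rightarrow> real) \<Rightarrow> ('i \<Rightarrow> real) \<Rightarrow> real" where
  "OPT v s = Max (range (\<lambda>i. v i s))"

definition det_ex_post_IC_IR ::
  "('i::finite \<Rightarrow> real set) \<Rightarrow> ('i \<Rightarrow> ('i \<Rightarrow> real) \<Rightarrow> real) \<Rightarrow> 'i mech \<Rightarrow> bool" where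
  "det_ex_post_IC_IR S v M \<longleftrightarrow>
     (let x = fst M; p = snd M in
       (\<forall>b\<in>profiles S. (\<forall>i. x b i \<in> {0, 1}) \<and> (\<Sum>i\<in>UNIV. x b i) \<le> 1) \<and>
       (\<forall>s\<in>profiles S. \<forall>i. \<forall>bi\<in>S i.
          x s i * v i s - p s i \<ge>
            max (x (s(i := bi)) i * v i s - p (s(i := bi)) i) 0))"

text \<open>A universally ex-post IC-IR mechanism: a probability distribution D over
  deterministic ex-post IC-IR mechanisms (allocations and payments integrable,
  so that all expectations are well defined).\<close>

definition univ_ex_post_IC_IR ::
  "('i::finite \<Rightarrow> real set) \<Rightarrow> ('i \<Rightarrow> ('i \<Rightarrow> real) \<Rightarrow> real) \<Rightarrow> 'i mech measure \<Rightarrow> bool" where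
  "univ_ex_post_IC_IR S v D \<longleftrightarrow>
     prob_space D \<and>
     (\<forall>M\<in>space D. det_ex_post_IC_IR S v M) \<and>
     (\<forall>b\<in>profiles S. \<forall>i. integrable D (\<lambda>M. fst M b i) \<and> integrable D (\<lambda>M. snd M b i))"

definition exp_welfare_M ::
  "('i::finite \<Rightarrow> ('i \<Rightarrow> real) \<Rightarrow> real) \<Rightarrow> 'i mech measure \<Rightarrow> ('i \<Rightarrow> real) \<Rightarrow> ('i \<Rightarrow> real) \<Rightarrow> real" where
  "exp_welfare_M v D b s = (\<integral>M. (\<Sum>i\<in>UNIV. fst M b i * v i s) \<partial>D)"

definition alpha_approx ::
  "('i::finite \<Rightarrow> real set) \<Rightarrow> ('i \<Rightarrow> ('i \<Rightarrow> real) \<Rightarrow> real) \<Rightarrow> 'i mech measure \<Rightarrow> real \<Rightarrow> bool" where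
  "alpha_approx S v D \<alpha> \<longleftrightarrow> (\<forall>s\<in>profiles S. OPT v s / \<alpha> \<le> exp_welfare_M v D s s)"

definition prop_alloc :: "('i::finite \<Rightarrow> real) \<Rightarrow> 'i \<Rightarrow> real" where
  "prop_alloc b i = b i / ((\<Sum>j\<in>UNIV. b j) + 1)"

text \<open>The mixture M': run D with probability 1 - eps, proportional allocation with
  probability eps. Expected utility and expected welfare (expectation over all
  randomness of M').\<close>

definition mix_exp_utility ::
  "('i::finite \<Rightarrow> ('i \<Rightarrow> real) \<Rightarrow> real) \<Rightarrow> 'i mech measure \<Rightarrow> real \<Rightarrow> 'i \<Rightarrow> ('i \<Rightarrow> real) \<Rightarrow> ('i \<Rightarrow> real) \<Rightarrow> real" where
  "mix_exp_utility v D \<epsilon> i b s =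
     (1 - \<epsilon>) * (\<integral>M. fst M b i * v i s - snd M b i \<partial>D) + \<epsilon> * (prop_alloc b i * v i s - 0)"

definition mix_exp_welfare ::
  "('i::finite \<Rightarrow> ('i \<Rightarrow> real) \<Rightarrow> real) \<Rightarrow> 'i mech measure \<Rightarrow> real \<Rightarrow> ('i \<Rightarrow> real) \<Rightarrow> ('i \<Rightarrow> real) \<Rightarrow> real" where
  "mix_exp_welfare v D \<epsilon> b s =
     (1 - \<epsilon>) * exp_welfare_M v D b s + \<epsilon> * (\<Sum>i\<in>UNIV. prop_alloc b i * v i s)"

definition pure_NE_no_overbid ::
  "('i::finite \<Rightarrow> real set) \<Rightarrow> ('i \<Rightarrow> ('i \<Rightarrow> real) \<Rightarrow> real) \<Rightarrow> 'i mech measure \<Rightarrow> real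
     \<Rightarrow> ('i \<Rightarrow> real) \<Rightarrow> ('i \<Rightarrow> real) \<Rightarrow> bool" where
  "pure_NE_no_overbid S v D \<epsilon> s b \<longleftrightarrow>
     b \<in> profiles S \<and> (\<forall>i. b i \<le> s i) \<and>
     (\<forall>i. \<forall>bi'\<in>S i. bi' \<le> s i \<longrightarrow>
        mix_exp_utility v D \<epsilon> i (b(i := bi')) s \<le> mix_exp_utility v D \<epsilon> i b s)"

end

theory Submission
  imports Defs
begin

text \<open>In a pure Nash equilibrium under no-overbidding every bidder bids truthfully.
  Raising a bid from b_i to s_i never hurts a bidder in an ex-post IC-IR mechanism
  (ex-post IC makes the allocation monotone in the bid and bounds the payment
  increase), and it strictly increases the winning probability under proportional
  allocation, which matters since v_i(s) > 0 as soon as some signal of bidder i lies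
  below s_i. Hence a profitable deviation exists unless b = s, and at the truthful
  profile M' obtains at least a (1 - \<epsilon>) fraction of the welfare of M, which is at
  least OPT(s)/\<alpha>.\<close>

lemma profiles_update:
  "s \<in> profiles S \<Longrightarrow> y \<in> S i \<Longrightarrow> s(i := y) \<in> profiles S"
  by (simp add: profiles_def)

lemma valid_setting_signal_nonneg:
  assumes "valid_setting S v" and "s \<in> profiles S"
  shows "0 \<le> s j"
proof -
  have "s j \<in> S j" "S j \<subseteq> {0..}"
    using assms unfolding valid_setting_def profiles_def by auto
  then show ?thesis by auto
qed

lemma valid_setting_valuation_nonneg:
  "valid_setting S v \<Longrightarrow> s \<in> profiles S \<Longrightarrow> 0 \<le> v i s"
  unfolding valid_setting_def by blast

lemma valid_setting_valuation_mono:
  fixes s t :: "'i::finite \<Rightarrow> real"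
  assumes vs: "valid_setting S v" and t: "t \<in> profiles S" and s: "s \<in> profiles S"
    and le: "\<And>j. t j \<le> s j"
  shows "v i t \<le> v i s"
proof -
  define f where "f A = (\<lambda>j. if j \<in> A then s j else t j)" for A
  have f_profile: "f A \<in> profiles S" for A
    using t s unfolding f_def profiles_def by auto
  have "v i t \<le> v i (f A)" if "finite A" for A
    using that
  proof (induction A rule: finite_induct)
    case empty
    then show ?case by (simp add: f_def)
  next
    case (insert a A)
    have "f (insert a A) = (f A)(a := s a)" by (auto simp: f_def)
    moreover have "v i (f A) \<le> v i ((f A)(a := s a))"
      using vs f_profile[of A] s le unfolding valid_setting_def profiles_def f_def by auto
    ultimately show ?case using insert.IH by (metis order_trans)
  qed
  moreover have "f UNIV = s" by (simp add: f_def)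
  ultimately show ?thesis by (metis finite)
qed

lemma valid_setting_valuation_strict_mono:
  assumes "valid_setting S v" and "s \<in> profiles S" and "y \<in> S i" and "s i < y"
  shows "v i s < v i (s(i := y))"
  using assms unfolding valid_setting_def by blast

lemma valid_setting_valuation_pos:
  assumes vs: "valid_setting S v" and s: "s \<in> profiles S" and y: "y \<in> S i" "y < s i"
  shows "0 < v i s"
proof -
  have sy: "s(i := y) \<in> profiles S" using s y(1) by (rule profiles_update)
  have si: "s i \<in> S i" using s by (simp add: profiles_def)
  have "0 \<le> v i (s(i := y))" using vs sy by (rule valid_setting_valuation_nonneg)
  also have "\<dots> < v i ((s(i := y))(i := s i))"
    using valid_setting_valuation_strict_mono[OF vs sy si] y(2) by simp
  finally show ?thesis by simp
qed

lemma det_ex_post_IC: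
  assumes "det_ex_post_IC_IR S v (x, p)" and "s \<in> profiles S" and "y \<in> S i"
  shows "x (s(i := y)) i * v i s - p (s(i := y)) i \<le> x s i * v i s - p s i"
  using assms unfolding det_ex_post_IC_IR_def Let_def by auto

lemma det_ex_post_IC_IR_alloc_mono:
  assumes vs: "valid_setting S v" and ic: "det_ex_post_IC_IR S v (x, p)"
    and b: "b \<in> profiles S" and y: "y \<in> S i" "b i < y"
  shows "x b i \<le> x (b(i := y)) i"
proof -
  define t where "t = b(i := y)"
  have t: "t \<in> profiles S" unfolding t_def using b y(1) by (rule profiles_update)
  have bi: "b i \<in> S i" using b by (simp add: profiles_def)
  have "x b i * v i t - p b i \<le> x t i * v i t - p t i"
    using det_ex_post_IC[OF ic t bi] by (simp add: t_def)
  moreover have "x t i * v i b - p t i \<le> x b i * v i b - p b i"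
    using det_ex_post_IC[OF ic b y(1)] by (simp add: t_def)
  moreover have "(x t i - x b i) * (v i t - v i b)
      = (x t i * v i t + x b i * v i b) - (x b i * v i t + x t i * v i b)"
    by (simp add: algebra_simps)
  ultimately have "0 \<le> (x t i - x b i) * (v i t - v i b)" by linarith
  moreover have "v i b < v i t"
    unfolding t_def using valid_setting_valuation_strict_mono[OF vs b y] .
  ultimately show ?thesis unfolding t_def by (simp add: zero_le_mult_iff)
qed

lemma det_ex_post_IC_IR_utility_raise_bid:
  assumes vs: "valid_setting S v" and ic: "det_ex_post_IC_IR S v M"
    and b: "b \<in> profiles S" and y: "y \<in> S i" "b i \<le> y"
    and w: "v i (b(i := y)) \<le> w"
  shows "fst M b i * w - snd M b i \<le> fst M (b(i := y)) i * w - snd M (b(i := y)) i"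
proof (cases "b i = y")
  case True
  then show ?thesis by (simp add: fun_upd_idem)
next
  case False
  obtain x p where M: "M = (x, p)" by fastforce
  define t where "t = b(i := y)"
  have t: "t \<in> profiles S" unfolding t_def using b y(1) by (rule profiles_update)
  have bi: "b i \<in> S i" using b by (simp add: profiles_def)
  have payment: "p t i - p b i \<le> (x t i - x b i) * v i t"
    using det_ex_post_IC[OF ic[unfolded M] t bi] by (simp add: t_def algebra_simps)
  have "x b i \<le> x t i"
    using det_ex_post_IC_IR_alloc_mono[OF vs ic[unfolded M] b y(1)] y(2) False
    by (simp add: t_def)
  then have "(x t i - x b i) * v i t \<le> (x t i - x b i) * w"
    using w by (intro mult_left_mono) (simp_all add: t_def)
  with payment show ?thesis unfolding M t_def by (simp add: algebra_simps)
qed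

lemma univ_ex_post_IC_IR_integrable_utility:
  assumes "univ_ex_post_IC_IR S v D" and "b \<in> profiles S"
  shows "integrable D (\<lambda>M. fst M b i * w - snd M b i)"
proof (intro Bochner_Integration.integrable_diff integrable_mult_left)
  show "integrable D (\<lambda>M. fst M b i)" "integrable D (\<lambda>M. snd M b i)"
    using assms unfolding univ_ex_post_IC_IR_def by blast+
qed

lemma univ_ex_post_IC_IR_utility_raise_bid:
  assumes vs: "valid_setting S v" and D: "univ_ex_post_IC_IR S v D"
    and b: "b \<in> profiles S" and y: "y \<in> S i" "b i \<le> y"
    and w: "v i (b(i := y)) \<le> w"
  shows "(\<integral>M. fst M b i * w - snd M b i \<partial>D)
           \<le> (\<integral>M. fst M (b(i := y)) i * w - snd M (b(i := y)) i \<partial>D)"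
proof (rule integral_mono)
  show "integrable D (\<lambda>M. fst M b i * w - snd M b i)"
    using D b by (rule univ_ex_post_IC_IR_integrable_utility)
  show "integrable D (\<lambda>M. fst M (b(i := y)) i * w - snd M (b(i := y)) i)"
    using D profiles_update[OF b y(1)] by (rule univ_ex_post_IC_IR_integrable_utility)
  fix M assume "M \<in> space D"
  then have "det_ex_post_IC_IR S v M" using D unfolding univ_ex_post_IC_IR_def by auto
  then show "fst M b i * w - snd M b i \<le> fst M (b(i := y)) i * w - snd M (b(i := y)) i"
    using det_ex_post_IC_IR_utility_raise_bid[OF vs _ b y w] by blast
qed

lemma prop_alloc_nonneg:
  "(\<And>j. 0 \<le> b j) \<Longrightarrow> 0 \<le> prop_alloc b i"
  unfolding prop_alloc_def by (simp add: sum_nonneg)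

lemma prop_alloc_strict_mono:
  fixes b :: "'i::finite \<Rightarrow> real"
  assumes b: "\<And>j. 0 \<le> b j" and lt: "b i < y"
  shows "prop_alloc b i < prop_alloc (b(i := y)) i"
proof -
  define B where "B = (\<Sum>j\<in>UNIV. b j)"
  have sum_update: "(\<Sum>j\<in>UNIV. (b(i := y)) j) = B - b i + y"
    unfolding B_def by (simp add: sum.remove[of UNIV i] sum.cong[of "UNIV - {i}" _ "b(i := y)" b])
  have "b i \<le> B" unfolding B_def using member_le_sum[of i UNIV b] b by auto
  have "b i * (B - b i + y + 1) = b i * (B + 1) + b i * (y - b i)" by algebra
  also have "\<dots> < b i * (B + 1) + (B + 1) * (y - b i)"
    using \<open>b i \<le> B\<close> lt by (intro add_strict_left_mono mult_strict_right_mono) auto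
  also have "\<dots> = y * (B + 1)" by algebra
  finally have "b i / (B + 1) < y / (B - b i + y + 1)"
    using \<open>b i \<le> B\<close> b[of i] lt by (simp add: divide_simps)
  then show ?thesis unfolding prop_alloc_def sum_update B_def[symmetric] by simp
qed

lemma pure_NE_no_overbid_truthful:
  assumes vs: "valid_setting S v" and D: "univ_ex_post_IC_IR S v D"
    and \<epsilon>: "0 < \<epsilon>" "\<epsilon> \<le> 1"
    and s: "s \<in> profiles S" and ne: "pure_NE_no_overbid S v D \<epsilon> s b"
  shows "b = s"
proof
  fix i
  have b: "b \<in> profiles S" and b_le: "\<And>j. b j \<le> s j"
    using ne by (auto simp: pure_NE_no_overbid_def)
  have si: "s i \<in> S i" and bi: "b i \<in> S i" using s b by (auto simp: profiles_def)
  have b_nonneg: "\<And>j. 0 \<le> b j" using vs b by (rule valid_setting_signal_nonneg)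
  show "b i = s i"
  proof (rule ccontr)
    assume "b i \<noteq> s i"
    with b_le[of i] have lt: "b i < s i" by simp
    have "v i (b(i := s i)) \<le> v i s"
      using valid_setting_valuation_mono[OF vs profiles_update[OF b si] s] b_le by simp
    then have mech: "(\<integral>M. fst M b i * v i s - snd M b i \<partial>D)
        \<le> (\<integral>M. fst M (b(i := s i)) i * v i s - snd M (b(i := s i)) i \<partial>D)"
      using univ_ex_post_IC_IR_utility_raise_bid[OF vs D b si] lt by simp
    have "prop_alloc b i < prop_alloc (b(i := s i)) i"
      using b_nonneg lt by (rule prop_alloc_strict_mono)
    then have "prop_alloc b i * v i s < prop_alloc (b(i := s i)) i * v i s"
      using valid_setting_valuation_pos[OF vs s bi lt] by simp
    with mech \<epsilon> have "mix_exp_utility v D \<epsilon> i b s < mix_exp_utility v D \<epsilon> i (b(i := s i)) s"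
      unfolding mix_exp_utility_def
      by (intro add_le_less_mono mult_left_mono mult_strict_left_mono) auto
    moreover have "mix_exp_utility v D \<epsilon> i (b(i := s i)) s \<le> mix_exp_utility v D \<epsilon> i b s"
      using ne si by (auto simp: pure_NE_no_overbid_def)
    ultimately show False by simp
  qed
qed

lemma mix_exp_welfare_ge:
  assumes vs: "valid_setting S v" and s: "s \<in> profiles S" and \<epsilon>: "0 \<le> \<epsilon>"
  shows "(1 - \<epsilon>) * exp_welfare_M v D s s \<le> mix_exp_welfare v D \<epsilon> s s"
proof -
  have "0 \<le> (\<Sum>i\<in>UNIV. prop_alloc s i * v i s)"
    using valid_setting_signal_nonneg[OF vs s] valid_setting_valuation_nonneg[OF vs s]
    by (intro sum_nonneg mult_nonneg_nonneg prop_alloc_nonneg)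
  with \<epsilon> show ?thesis unfolding mix_exp_welfare_def by simp
qed

theorem mainTheorem8:
  fixes S :: "'i::finite \<Rightarrow> real set"
    and v :: "'i \<Rightarrow> ('i \<Rightarrow> real) \<Rightarrow> real"
    and D :: "'i mech measure"
    and \<alpha> \<epsilon> :: real
  assumes "valid_setting S v"
    and "univ_ex_post_IC_IR S v D"
    and "\<alpha> > 0"
    and "alpha_approx S v D \<alpha>"
    and "0 < \<epsilon>" and "\<epsilon> < 1"
  shows "\<forall>s\<in>profiles S. \<forall>b. pure_NE_no_overbid S v D \<epsilon> s b \<longrightarrow>
           OPT v s \<le> \<alpha> / (1 - \<epsilon>) * mix_exp_welfare v D \<epsilon> b s"
proof (intro ballI allI impI)
  fix s b
  assume s: "s \<in> profiles S" and ne: "pure_NE_no_overbid S v D \<epsilon> s b"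
  have "b = s" using pure_NE_no_overbid_truthful[OF assms(1,2,5) _ s ne] assms(6) by simp
  have "(1 - \<epsilon>) * (OPT v s / \<alpha>) \<le> (1 - \<epsilon>) * exp_welfare_M v D s s"
    using assms(4,6) s by (intro mult_left_mono) (auto simp: alpha_approx_def)
  also have "\<dots> \<le> mix_exp_welfare v D \<epsilon> b s"
    using mix_exp_welfare_ge[OF assms(1) s] assms(5) \<open>b = s\<close> by simp
  finally show "OPT v s \<le> \<alpha> / (1 - \<epsilon>) * mix_exp_welfare v D \<epsilon> b s"
    using assms(3,6) by (simp add: field_simps)
qed

end
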